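(* In the setting below, for every nonempty $A\subseteq[n]$: $\Pr_{(f,g,h)\sim\Psi}(\neg E_1(f,g,h))\le 2^{-6}$, where $E_1(f,g,h)$ is the event $2^{-16}b\le 2^{-t(f)}|A|\le 2^{-1}b$.
   Context: $[N]:=\{0,\dots,N-1\}$. Fix integers $n\ge1$ and real $0<\varepsilon<1$. Let $b:=2^{\lceil\log_2(9\cdot 2^{23}\varepsilon^{-2})\rceil}$ and $k:=\lceil\tfrac{15}{2}\ln b+16\rceil$. Hash families: for $d\ge1$, identify $[2^d]$ with the field $\mathrm{GF}(2^d)$ via the binary representation (bits as coordinates in a fixed polynomial basis). For integers $k'\ge1$, $N\le 2^d$ and $c\le d$, $\mathcal H_{k'}([N],[2^c])$ is the uniform distribution over coefficient tuples $(a_0,\dots,a_{k'-1})\in\mathrm{GF}(2^d)^{k'}$, each giving the function $x\mapsto(\sum_i a_ix^i)\bmod 2^c$ on $[N]$ (field elements read as integers in $[2^d]$); $\mathcal G_{k'}([N])$ is the uniform distribution over the same tuples giving $x\mapsto \mathrm{tz}(\sum_i a_ix^i)$, where $\mathrm{tz}(y)$ is the number of trailing zeros of the $d$-bit binary representation of $y$ (with $\mathrm{tz}(0)=d$). Here $d$ is a fixed integer with $2^d\ge N$ and $d\ge c$. $\Psi:=\mathcal G_2([n])\times\mathcal H_2([n],[2^5b^2])\times\mathcal H_k([2^5b^2],[b])$ with the product (uniform) distribution; elements $\psi=(f,g,h)$. For fixed nonempty $A\subseteq[n]$: $t(f):=\max_{a\in A}f(a)-\log_2 b+9$. *)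

theory Defs
  imports "HOL-Probability.Probability" "HOL-Library.Z2"
    "HOL-Computational_Algebra.Polynomial_Factorial"
begin

text \<open>(Bits i >= y of y vanish, so the sum over i < y covers all bits.) GF(2^d) is realised as bit poly modulo an irreducible polynomial P of degree d
 (polynomial basis 1, X, ..., X^(d-1)); the integer y < 2^d is identified with the
 residue class whose coefficient of X^i is bit i of y.\<close>

definition poly_of_nat :: "nat \<Rightarrow> bit poly" where
  "poly_of_nat y = (\<Sum>i<y. monom (of_bool (bit y i)) i)"

definition nat_of_poly :: "bit poly \<Rightarrow> nat" where
  "nat_of_poly p = (\<Sum>i\<le>degree p. (if coeff p i = 1 then 2 ^ i else 0))"

definition gf_eval :: "bit poly \<Rightarrow> nat list \<Rightarrow> nat \<Rightarrow> nat" where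
  "gf_eval P as x =
     nat_of_poly ((\<Sum>i<length as. poly_of_nat (as ! i) * poly_of_nat x ^ i) mod P)"

definition coeff_tuples :: "nat \<Rightarrow> nat \<Rightarrow> nat list pmf" where
  "coeff_tuples d k = pmf_of_set {as. length as = k \<and> set as \<subseteq> {..<2 ^ d}}"

text \<open>H_k([N],[2^c]); functions are extended by 0 outside [N].\<close>
definition H_fam :: "bit poly \<Rightarrow> nat \<Rightarrow> nat \<Rightarrow> nat \<Rightarrow> nat \<Rightarrow> (nat \<Rightarrow> nat) pmf" where
  "H_fam P d k N c = map_pmf (\<lambda>as x. if x < N then gf_eval P as x mod 2 ^ c else 0)
                        (coeff_tuples d k)"

definition tz :: "nat \<Rightarrow> nat \<Rightarrow> nat" where
  "tz d y = (if y = 0 then d else multiplicity (2::nat) y)"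

text \<open>G_k([N]); functions are extended by 0 outside [N].\<close>
definition G_fam :: "bit poly \<Rightarrow> nat \<Rightarrow> nat \<Rightarrow> nat \<Rightarrow> (nat \<Rightarrow> nat) pmf" where
  "G_fam P d k N = map_pmf (\<lambda>as x. if x < N then tz d (gf_eval P as x) else 0)
                        (coeff_tuples d k)"

text \<open>log_2 b, where b = 2^ceil(log_2(9 * 2^23 * eps^-2)).\<close>
definition lb :: "real \<Rightarrow> nat" where
  "lb \<epsilon> = nat \<lceil>log 2 (9 * 2 ^ 23 * \<epsilon> powr (-2))\<rceil>"

definition bpar :: "real \<Rightarrow> nat" where
  "bpar \<epsilon> = 2 ^ lb \<epsilon>"

definition kpar :: "real \<Rightarrow> nat" where
  "kpar \<epsilon> = nat \<lceil>15 / 2 * ln (real (bpar \<epsilon>)) + 16\<rceil>"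

definition tpar :: "real \<Rightarrow> nat set \<Rightarrow> (nat \<Rightarrow> nat) \<Rightarrow> int" where
  "tpar \<epsilon> A f = int (Max (f ` A)) - int (lb \<epsilon>) + 9"

definition E1 :: "real \<Rightarrow> nat set \<Rightarrow> (nat \<Rightarrow> nat) \<times> (nat \<Rightarrow> nat) \<times> (nat \<Rightarrow> nat) \<Rightarrow> bool" where
  "E1 \<epsilon> A \<psi> = (case \<psi> of (f, g, h) \<Rightarrow>
     2 powr (-16) * real (bpar \<epsilon>) \<le> 2 powr (- real_of_int (tpar \<epsilon> A f)) * real (card A)
   \<and> 2 powr (- real_of_int (tpar \<epsilon> A f)) * real (card A) \<le> 2 powr (-1) * real (bpar \<epsilon>))"

text \<open>Psi = G_2([n]) x H_2([n],[2^5 b^2]) x H_k([2^5 b^2],[b]), each family with its own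
 field GF(2^d_i) given by an irreducible polynomial P_i of degree d_i.\<close>
definition Psi :: "real \<Rightarrow> nat \<Rightarrow> bit poly \<Rightarrow> nat \<Rightarrow> bit poly \<Rightarrow> nat \<Rightarrow> bit poly \<Rightarrow> nat
     \<Rightarrow> ((nat \<Rightarrow> nat) \<times> (nat \<Rightarrow> nat) \<times> (nat \<Rightarrow> nat)) pmf" where
  "Psi \<epsilon> n P1 d1 P2 d2 P3 d3 =
     pair_pmf (G_fam P1 d1 2 n)
       (pair_pmf (H_fam P2 d2 2 n (5 + 2 * lb \<epsilon>))
                 (H_fam P3 d3 (kpar \<epsilon>) (2 ^ 5 * bpar \<epsilon> ^ 2) (lb \<epsilon>)))"

end

theory Submission
  imports Defs "HOL-Computational_Algebra.Field_as_Ring" "HOL-Library.Discrete_Functions"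
begin

text \<open>Only the first component f of \<open>\<psi>\<close> enters \<open>E\<^sub>1\<close>. Let \<open>k = \<lfloor>log\<^sub>2 |A|\<rfloor>\<close>. The event \<open>E\<^sub>1\<close> holds as soon as
  \<open>max\<^sub>a\<^sub>\<in>\<^sub>A f(a)\<close> lies within 7 of k. For \<open>f(x) = tz(a\<^sub>0 + a\<^sub>1x)\<close> and distinct points x, y the map
  \<open>(a\<^sub>0, a\<^sub>1) \<mapsto> (a\<^sub>0 + a\<^sub>1x, a\<^sub>0 + a\<^sub>1y)\<close> is a bijection of \<open>GF(2\<^sup>d)\<^sup>2\<close>, so the events \<open>f(x) \<ge> s\<close> have
  probability \<open>2\<^sup>-\<^sup>s\<close> and are pairwise independent. A union bound shows that some \<open>f(a) \<ge> k + 8\<close>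
  with probability at most \<open>|A| 2\<^sup>-\<^sup>k\<^sup>-\<^sup>8 < 2\<^sup>-\<^sup>7\<close>; the second moment method shows that no
  \<open>f(a) \<ge> k - 7\<close> with probability at most \<open>2\<^sup>k\<^sup>-\<^sup>7 / |A| \<le> 2\<^sup>-\<^sup>7\<close>.\<close>

text \<open>These instances make \<open>bit poly\<close> a factorial ring, so irreducible polynomials are prime.\<close>

instantiation bit ::
  "{unique_euclidean_ring, normalization_euclidean_semiring, normalization_semidom_multiplicative}"
begin
definition [simp]: "normalize_bit = (normalize_field :: bit \<Rightarrow> _)"
definition [simp]: "unit_factor_bit = (unit_factor_field :: bit \<Rightarrow> _)"
definition [simp]: "euclidean_size_bit = (euclidean_size_field :: bit \<Rightarrow> _)"
definition [simp]: "division_segment (x :: bit) = 1"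
instance
  by standard
    (simp_all add: dvd_field_iff field_split_simps modulo_bit_unfold split: if_splits)
end

instantiation bit :: euclidean_ring_gcd
begin
definition gcd_bit :: "bit \<Rightarrow> bit \<Rightarrow> bit" where
  "gcd_bit = Euclidean_Algorithm.gcd"
definition lcm_bit :: "bit \<Rightarrow> bit \<Rightarrow> bit" where
  "lcm_bit = Euclidean_Algorithm.lcm"
definition Gcd_bit :: "bit set \<Rightarrow> bit" where
  "Gcd_bit = Euclidean_Algorithm.Gcd"
definition Lcm_bit :: "bit set \<Rightarrow> bit" where
  "Lcm_bit = Euclidean_Algorithm.Lcm"
instance by standard (simp_all add: gcd_bit_def lcm_bit_def Gcd_bit_def Lcm_bit_def)
end

instance bit :: field_gcd ..

lemma coeff_poly_of_nat: "coeff (poly_of_nat y) i = of_bool (bit y i)"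
proof -
  have "coeff (poly_of_nat y) i = (if i < y then of_bool (bit y i) else 0)"
    unfolding poly_of_nat_def by (simp add: coeff_sum coeff_monom sum.delta)
  moreover have "\<not> bit y i" if "\<not> i < y"
  proof -
    have "y < 2 ^ i" using that by (meson less_exp not_less order_le_less_trans)
    then show ?thesis by (simp add: bit_nat_def)
  qed
  ultimately show ?thesis by auto
qed

lemma bit_sum_power2_iff: "finite I \<Longrightarrow> bit (\<Sum>i\<in>I. (2::nat) ^ i) j \<longleftrightarrow> j \<in> I"
proof (induction I arbitrary: j rule: finite_induct)
  case (insert x I)
  have "\<not> bit ((2::nat) ^ x) m \<or> \<not> bit (\<Sum>i\<in>I. (2::nat) ^ i) m" for m
    using insert.IH[of m] insert.hyps(2) by (simp add: bit_exp_iff)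
  then have "bit (2 ^ x + (\<Sum>i\<in>I. (2::nat) ^ i)) j
      \<longleftrightarrow> bit ((2::nat) ^ x) j \<or> bit (\<Sum>i\<in>I. (2::nat) ^ i) j"
    by (rule bit_disjunctive_add_iff)
  then show ?case using insert.hyps insert.IH[of j] by (simp add: bit_exp_iff)
qed simp

lemma bit_nat_of_poly: "bit (nat_of_poly q) j \<longleftrightarrow> coeff q j = 1"
proof -
  have "nat_of_poly q = (\<Sum>i\<in>{i \<in> {..degree q}. coeff q i = 1}. 2 ^ i)"
    unfolding nat_of_poly_def by (simp only: sum.inter_filter[OF finite_atMost])
  then have "bit (nat_of_poly q) j \<longleftrightarrow> j \<le> degree q \<and> coeff q j = 1"
    by (simp add: bit_sum_power2_iff)
  then show ?thesis using le_degree[of q j] by auto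
qed

lemma poly_of_nat_of_poly [simp]: "poly_of_nat (nat_of_poly q) = q"
proof (rule poly_eqI)
  fix i show "coeff (poly_of_nat (nat_of_poly q)) i = coeff q i"
    by (cases "coeff q i") (auto simp: coeff_poly_of_nat bit_nat_of_poly)
qed

lemma nat_of_poly_of_nat [simp]: "nat_of_poly (poly_of_nat y) = y"
  by (rule bit_eqI) (simp add: bit_nat_of_poly coeff_poly_of_nat)

lemma nat_of_poly_eq_iff: "nat_of_poly p = nat_of_poly q \<longleftrightarrow> p = q"
  by (metis poly_of_nat_of_poly)

lemma poly_of_nat_eq_iff: "poly_of_nat x = poly_of_nat y \<longleftrightarrow> x = y"
  by (metis nat_of_poly_of_nat)

lemma degree_poly_of_nat_less:
  assumes "y < 2 ^ d" "d \<ge> 1"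
  shows "degree (poly_of_nat y) < d"
proof -
  have "coeff (poly_of_nat y) i = 0" if "i \<ge> d" for i
  proof -
    have "y < 2 ^ i" using assms that by (meson order_less_le_trans power_increasing one_le_numeral)
    then show ?thesis by (simp add: coeff_poly_of_nat bit_nat_def)
  qed
  then have "degree (poly_of_nat y) \<le> d - 1" by (intro degree_le) auto
  then show ?thesis using assms by linarith
qed

lemma nat_of_poly_less:
  assumes "degree q < d"
  shows "nat_of_poly q < 2 ^ d"
proof -
  have "take_bit d (nat_of_poly q) = nat_of_poly q"
  proof (rule bit_eqI)
    fix i
    have "coeff q i = 1 \<Longrightarrow> i < d" using assms le_degree[of q i] by fastforce
    then show "bit (take_bit d (nat_of_poly q)) i = bit (nat_of_poly q) i"
      by (auto simp: bit_take_bit_iff bit_nat_of_poly)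
  qed
  then show ?thesis by (metis take_bit_nat_less_exp)
qed

definition gf_affine :: "bit poly \<Rightarrow> nat \<Rightarrow> nat \<times> nat \<Rightarrow> nat" where
  "gf_affine P x p = nat_of_poly ((poly_of_nat (fst p) + poly_of_nat (snd p) * poly_of_nat x) mod P)"

lemma gf_eval_length_2: "gf_eval P [a\<^sub>0, a\<^sub>1] x = gf_affine P x (a\<^sub>0, a\<^sub>1)"
  unfolding gf_eval_def gf_affine_def by (simp add: numeral_2_eq_2)

abbreviation gf_pairs :: "nat \<Rightarrow> (nat \<times> nat) set" where
  "gf_pairs d \<equiv> {..<2 ^ d} \<times> {..<2 ^ d}"

lemma card_gf_pairs: "card (gf_pairs d) = 2 ^ d * 2 ^ d"
  by (simp add: card_cartesian_product)

lemma card_multiples_power2_below: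
  assumes "t \<le> d"
  shows "card {u \<in> {..<(2::nat) ^ d}. 2 ^ t dvd u} = 2 ^ (d - t)"
proof -
  have split: "(2::nat) ^ d = 2 ^ t * 2 ^ (d - t)" using assms by (simp add: power_add[symmetric])
  have "{u \<in> {..<(2::nat) ^ d}. 2 ^ t dvd u} = (\<lambda>z. 2 ^ t * z) ` {..<2 ^ (d - t)}"
  proof
    show "{u \<in> {..<(2::nat) ^ d}. 2 ^ t dvd u} \<subseteq> (\<lambda>z. 2 ^ t * z) ` {..<2 ^ (d - t)}"
      using split by (auto elim!: dvdE)
  qed (use split in auto)
  moreover have "inj_on (\<lambda>z. (2::nat) ^ t * z) {..<2 ^ (d - t)}" by (auto intro: inj_onI)
  ultimately show ?thesis by (simp add: card_image)
qed

lemma bij_betw_if_inj_on_self: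
  assumes "finite S" "inj_on \<phi> S" "\<phi> ` S \<subseteq> S"
  shows "bij_betw \<phi> S S"
  unfolding bij_betw_def using endo_inj_surj[OF assms(1,3,2)] assms(2) by blast

lemma card_Collect_bij_betw:
  assumes "bij_betw \<phi> S T"
  shows "card {p \<in> S. Q (\<phi> p)} = card {q \<in> T. Q q}"
  by (rule bij_betw_same_card, rule bij_betw_Collect[OF assms]) simp

lemma tz_ge_iff_dvd:
  assumes "t \<le> d"
  shows "t \<le> tz d y \<longleftrightarrow> 2 ^ t dvd y"
  using assms by (cases "y = 0") (simp_all add: tz_def power_dvd_iff_le_multiplicity)

lemma tz_le:
  assumes "y < 2 ^ d"
  shows "tz d y \<le> d"
proof (cases "y = 0")
  case False
  have "2 ^ multiplicity 2 y \<le> y"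
    using False multiplicity_dvd[of 2 y] by (simp add: dvd_imp_le)
  then have "(2::nat) ^ multiplicity 2 y < 2 ^ d" using assms by linarith
  then show ?thesis using False by (simp add: tz_def)
qed (simp add: tz_def)

lemma sum_square_deviation:
  fixes X :: "'a \<Rightarrow> real"
  shows "(\<Sum>p\<in>S. (X p - \<mu>)\<^sup>2) = (\<Sum>p\<in>S. (X p)\<^sup>2) - 2 * \<mu> * (\<Sum>p\<in>S. X p) + \<mu>\<^sup>2 * card S"
proof -
  have "(\<Sum>p\<in>S. (X p - \<mu>)\<^sup>2) = (\<Sum>p\<in>S. (X p)\<^sup>2) - (\<Sum>p\<in>S. 2 * \<mu> * X p) + (\<Sum>p\<in>S. \<mu>\<^sup>2)"
    by (simp add: power2_diff sum.distrib sum_subtractf mult.commute mult.left_commute)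
  then show ?thesis by (simp add: sum_distrib_left[symmetric])
qed

lemma card_Collect_real_eq_sum: "finite S \<Longrightarrow> real (card {p \<in> S. R p}) = (\<Sum>p\<in>S. of_bool (R p))"
  by (simp add: sum.inter_filter[symmetric] of_bool_def)

text \<open>Second moment method for a family of events \<open>I a\<close> of probability \<open>q\<close> on a uniform space \<open>S\<close>
  with pairwise correlations at most \<open>q\<^sup>2\<close>: the count \<open>X\<close> of events that occur has mean
  \<open>\<mu> = |A|q\<close> and variance at most \<open>\<mu>\<close>, and \<open>X = 0\<close> forces \<open>(X - \<mu>)\<^sup>2 = \<mu>\<^sup>2\<close>.\<close>
lemma card_none_second_moment:
  fixes I :: "'b \<Rightarrow> 'a \<Rightarrow> bool" and q :: real
  assumes "finite S" "finite A" "A \<noteq> {}" "q > 0"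
    and single: "\<And>a. a \<in> A \<Longrightarrow> real (card {p \<in> S. I a p}) = q * card S"
    and pair: "\<And>a b. a \<in> A \<Longrightarrow> b \<in> A \<Longrightarrow> a \<noteq> b \<Longrightarrow>
      real (card {p \<in> S. I a p \<and> I b p}) \<le> q\<^sup>2 * card S"
  shows "real (card {p \<in> S. \<forall>a\<in>A. \<not> I a p}) * (card A * q) \<le> card S"
proof -
  define \<mu> where "\<mu> = real (card A) * q"
  define X where "X p = (\<Sum>a\<in>A. of_bool (I a p) :: real)" for p
  have "\<mu> > 0" using assms(2-4) by (simp add: \<mu>_def card_gt_0_iff)
  have sum_X: "(\<Sum>p\<in>S. X p) = \<mu> * card S"
  proof -
    have "(\<Sum>p\<in>S. X p) = (\<Sum>a\<in>A. \<Sum>p\<in>S. of_bool (I a p))" unfolding X_def by (rule sum.swap)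
    also have "\<dots> = (\<Sum>a\<in>A. q * card S)"
      using single by (simp add: card_Collect_real_eq_sum[OF \<open>finite S\<close>, symmetric])
    finally show ?thesis by (simp add: \<mu>_def)
  qed
  have joint: "(\<Sum>p\<in>S. of_bool (I a p) * of_bool (I b p)) \<le> q\<^sup>2 * card S + (if a = b then q * card S else 0)"
    if "a \<in> A" "b \<in> A" for a b
  proof -
    have "(\<Sum>p\<in>S. (of_bool (I a p) * of_bool (I b p) :: real)) = real (card {p \<in> S. I a p \<and> I b p})"
      by (simp add: card_Collect_real_eq_sum[OF \<open>finite S\<close>] of_bool_conj)
    then show ?thesis
      using single[OF that(1)] pair[OF that] \<open>q > 0\<close> by (cases "a = b") simp_all
  qed
  have sum_X2: "(\<Sum>p\<in>S. (X p)\<^sup>2) \<le> \<mu>\<^sup>2 * card S + \<mu> * card S"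
  proof -
    have "(\<Sum>p\<in>S. (X p)\<^sup>2) = (\<Sum>a\<in>A. \<Sum>b\<in>A. \<Sum>p\<in>S. of_bool (I a p) * of_bool (I b p))"
      unfolding X_def by (simp add: power2_eq_square sum_product sum.swap[of _ S])
    also have "\<dots> \<le> (\<Sum>a\<in>A. \<Sum>b\<in>A. q\<^sup>2 * card S + (if a = b then q * card S else 0))"
      by (intro sum_mono joint)
    also have "\<dots> = real (card A) * real (card A) * (q\<^sup>2 * card S) + real (card A) * (q * card S)"
      using \<open>finite A\<close> by (simp add: sum.distrib sum.delta algebra_simps)
    finally show ?thesis by (simp add: \<mu>_def power2_eq_square algebra_simps)
  qed
  define Z where "Z = {p \<in> S. \<forall>a\<in>A. \<not> I a p}"
  have "real (card Z) * \<mu>\<^sup>2 = (\<Sum>p\<in>Z. (X p - \<mu>)\<^sup>2)"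
    by (simp add: Z_def X_def)
  also have "\<dots> \<le> (\<Sum>p\<in>S. (X p - \<mu>)\<^sup>2)"
    by (rule sum_mono2[OF \<open>finite S\<close>]) (auto simp: Z_def)
  also have "\<dots> = (\<Sum>p\<in>S. (X p)\<^sup>2) - 2 * \<mu> * (\<Sum>p\<in>S. X p) + \<mu>\<^sup>2 * card S"
    by (rule sum_square_deviation)
  also have "\<dots> \<le> \<mu> * card S"
    using sum_X sum_X2 by (simp add: power2_eq_square algebra_simps)
  finally have "real (card Z) * \<mu> * \<mu> \<le> card S * \<mu>" by (simp add: power2_eq_square algebra_simps)
  then have "real (card Z) * \<mu> \<le> card S" using \<open>\<mu> > 0\<close> by simp
  then show ?thesis by (simp add: Z_def \<mu>_def)
qed

locale gf2_field =
  fixes P :: "bit poly" and d :: nat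
  assumes irreducible_P: "irreducible P" and degree_P: "degree P = d"
begin

lemma d_ge_1: "d \<ge> 1"
  using irreducible_P is_unit_iff_degree[of P] degree_P by (auto simp: irreducible_def)

lemma P_nonzero: "P \<noteq> 0"
  using irreducible_P by auto

lemma P_dvd_poly_of_nat_diff_iff:
  assumes "x < 2 ^ d" "y < 2 ^ d"
  shows "P dvd poly_of_nat x - poly_of_nat y \<longleftrightarrow> x = y"
proof
  assume dvd: "P dvd poly_of_nat x - poly_of_nat y"
  have "degree (poly_of_nat x - poly_of_nat y) < degree P"
    using degree_diff_le_max[of "poly_of_nat x" "poly_of_nat y"] assms d_ge_1 degree_P
      degree_poly_of_nat_less[of x d] degree_poly_of_nat_less[of y d] by linarith
  then have "poly_of_nat x - poly_of_nat y = 0"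
    using dvd_imp_degree_le[OF dvd] by fastforce
  then show "x = y" by (simp add: poly_of_nat_eq_iff)
qed simp

lemma gf_affine_less: "gf_affine P x p < 2 ^ d"
proof -
  have "degree (q mod P) < d" for q
    using degree_mod_less[OF P_nonzero, of q] d_ge_1 degree_P by auto
  then show ?thesis unfolding gf_affine_def by (rule nat_of_poly_less)
qed

lemma gf_affine_eq_iff:
  "gf_affine P x p = gf_affine P x q \<longleftrightarrow>
     P dvd (poly_of_nat (fst p) - poly_of_nat (fst q))
       + (poly_of_nat (snd p) - poly_of_nat (snd q)) * poly_of_nat x"
proof -
  have "gf_affine P x p = gf_affine P x q \<longleftrightarrow>
      P dvd (poly_of_nat (fst p) + poly_of_nat (snd p) * poly_of_nat x)
        - (poly_of_nat (fst q) + poly_of_nat (snd q) * poly_of_nat x)"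
    unfolding gf_affine_def nat_of_poly_eq_iff by (rule mod_eq_dvd_iff)
  then show ?thesis by (simp add: algebra_simps)
qed

lemma bij_betw_gf_affine_snd: "bij_betw (\<lambda>p. (gf_affine P x p, snd p)) (gf_pairs d) (gf_pairs d)"
proof (rule bij_betw_if_inj_on_self)
  show "inj_on (\<lambda>p. (gf_affine P x p, snd p)) (gf_pairs d)"
  proof (rule inj_onI)
    fix p q
    assume "p \<in> gf_pairs d" "q \<in> gf_pairs d" and eq: "(gf_affine P x p, snd p) = (gf_affine P x q, snd q)"
    then have "fst p = fst q"
      using gf_affine_eq_iff[of x p q] P_dvd_poly_of_nat_diff_iff by auto
    with eq show "p = q" by (simp add: prod_eq_iff)
  qed
qed (auto simp: gf_affine_less)

text \<open>Two distinct evaluation points determine both coefficients, since \<open>P\<close> is prime and does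
  not divide the difference of the points.\<close>
lemma bij_betw_gf_affine_pair:
  assumes "x < 2 ^ d" "y < 2 ^ d" "x \<noteq> y"
  shows "bij_betw (\<lambda>p. (gf_affine P x p, gf_affine P y p)) (gf_pairs d) (gf_pairs d)"
proof (rule bij_betw_if_inj_on_self)
  show "inj_on (\<lambda>p. (gf_affine P x p, gf_affine P y p)) (gf_pairs d)"
  proof (rule inj_onI)
    fix p q
    assume p: "p \<in> gf_pairs d" and q: "q \<in> gf_pairs d"
      and eq: "(gf_affine P x p, gf_affine P y p) = (gf_affine P x q, gf_affine P y q)"
    define D\<^sub>0 where "D\<^sub>0 = poly_of_nat (fst p) - poly_of_nat (fst q)"
    define D\<^sub>1 where "D\<^sub>1 = poly_of_nat (snd p) - poly_of_nat (snd q)"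
    have dvd_x: "P dvd D\<^sub>0 + D\<^sub>1 * poly_of_nat x" and dvd_y: "P dvd D\<^sub>0 + D\<^sub>1 * poly_of_nat y"
      using eq gf_affine_eq_iff by (simp_all add: D\<^sub>0_def D\<^sub>1_def)
    have "P dvd (D\<^sub>0 + D\<^sub>1 * poly_of_nat x) - (D\<^sub>0 + D\<^sub>1 * poly_of_nat y)"
      using dvd_x dvd_y by (rule dvd_diff)
    then have "P dvd D\<^sub>1 * (poly_of_nat x - poly_of_nat y)" by (simp add: algebra_simps)
    moreover have "prime_elem P" using irreducible_P by (simp add: prime_elem_iff_irreducible)
    moreover have "\<not> P dvd poly_of_nat x - poly_of_nat y"
      using P_dvd_poly_of_nat_diff_iff assms by blast
    ultimately have "P dvd D\<^sub>1" by (simp add: prime_elem_dvd_mult_iff)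
    then have snd_eq: "snd p = snd q"
      using p q P_dvd_poly_of_nat_diff_iff unfolding D\<^sub>1_def by auto
    then have "P dvd D\<^sub>0" using dvd_x by (simp add: D\<^sub>1_def)
    then have "fst p = fst q"
      using p q P_dvd_poly_of_nat_diff_iff unfolding D\<^sub>0_def by auto
    with snd_eq show "p = q" by (simp add: prod_eq_iff)
  qed
qed (auto simp: gf_affine_less)

lemma card_tz_gf_affine_ge:
  assumes "t \<le> d"
  shows "card {p \<in> gf_pairs d. t \<le> tz d (gf_affine P x p)} = 2 ^ (d - t) * 2 ^ d"
proof -
  have "card {p \<in> gf_pairs d. t \<le> tz d (gf_affine P x p)} = card {q \<in> gf_pairs d. 2 ^ t dvd fst q}"
    using card_Collect_bij_betw[OF bij_betw_gf_affine_snd, where Q = "\<lambda>q. 2 ^ t dvd fst q"]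
    by (simp add: tz_ge_iff_dvd[OF assms])
  also have "{q \<in> gf_pairs d. 2 ^ t dvd fst q} = {u \<in> {..<2 ^ d}. 2 ^ t dvd u} \<times> {..<2 ^ d}"
    by auto
  also have "card \<dots> = 2 ^ (d - t) * 2 ^ d"
    by (simp only: card_cartesian_product card_multiples_power2_below[OF assms] card_lessThan)
  finally show ?thesis .
qed

lemma card_tz_gf_affine_ge_both:
  assumes "x < 2 ^ d" "y < 2 ^ d" "x \<noteq> y" "t \<le> d"
  shows "card {p \<in> gf_pairs d. t \<le> tz d (gf_affine P x p) \<and> t \<le> tz d (gf_affine P y p)}
    = 2 ^ (d - t) * 2 ^ (d - t)"
proof -
  have "card {p \<in> gf_pairs d. t \<le> tz d (gf_affine P x p) \<and> t \<le> tz d (gf_affine P y p)}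
      = card {q \<in> gf_pairs d. 2 ^ t dvd fst q \<and> 2 ^ t dvd snd q}"
    using card_Collect_bij_betw[OF bij_betw_gf_affine_pair[OF assms(1-3)],
        where Q = "\<lambda>q. 2 ^ t dvd fst q \<and> 2 ^ t dvd snd q"]
    by (simp add: tz_ge_iff_dvd[OF assms(4)])
  also have "{q \<in> gf_pairs d. 2 ^ t dvd fst q \<and> 2 ^ t dvd snd q}
      = {u \<in> {..<2 ^ d}. 2 ^ t dvd u} \<times> {u \<in> {..<2 ^ d}. 2 ^ t dvd u}"
    by auto
  also have "card \<dots> = 2 ^ (d - t) * 2 ^ (d - t)"
    by (simp only: card_cartesian_product card_multiples_power2_below[OF assms(4)])
  finally show ?thesis .
qed

lemma card_exists_tz_ge:
  assumes "finite A"
  shows "real (card {p \<in> gf_pairs d. \<exists>a\<in>A. s \<le> tz d (gf_affine P a p)})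
    \<le> card A / 2 ^ s * card (gf_pairs d)"
proof (cases "s \<le> d")
  case True
  have "{p \<in> gf_pairs d. \<exists>a\<in>A. s \<le> tz d (gf_affine P a p)}
      = (\<Union>a\<in>A. {p \<in> gf_pairs d. s \<le> tz d (gf_affine P a p)})"
    by auto
  then have "card {p \<in> gf_pairs d. \<exists>a\<in>A. s \<le> tz d (gf_affine P a p)}
      \<le> (\<Sum>a\<in>A. card {p \<in> gf_pairs d. s \<le> tz d (gf_affine P a p)})"
    by (simp add: card_UN_le[OF assms])
  also have "\<dots> = card A * (2 ^ (d - s) * 2 ^ d)"
    by (simp add: card_tz_gf_affine_ge[OF True])
  finally have "real (card {p \<in> gf_pairs d. \<exists>a\<in>A. s \<le> tz d (gf_affine P a p)})
      \<le> real (card A * (2 ^ (d - s) * 2 ^ d))"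
    by (simp only: of_nat_le_iff)
  also have "\<dots> = card A / 2 ^ s * card (gf_pairs d)"
  proof -
    have "(2::real) ^ d = 2 ^ (d - s) * 2 ^ s" using True by (simp add: power_add[symmetric])
    then show ?thesis by (simp add: card_gf_pairs)
  qed
  finally show ?thesis .
next
  case False
  have "\<not> s \<le> tz d (gf_affine P a p)" for a p
    using tz_le[OF gf_affine_less, of a p] False by linarith
  then show ?thesis by simp
qed

lemma card_all_tz_less:
  assumes "A \<subseteq> {..<2 ^ d}" "A \<noteq> {}" "s \<le> d"
  shows "real (card {p \<in> gf_pairs d. \<forall>a\<in>A. tz d (gf_affine P a p) < s}) * (card A / 2 ^ s)
    \<le> card (gf_pairs d)"
proof -
  have "finite A" using assms(1) finite_subset by blast
  define r where "r = d - s"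
  have d: "d = r + s" using assms(3) by (simp add: r_def)
  have "real (card {p \<in> gf_pairs d. \<forall>a\<in>A. \<not> s \<le> tz d (gf_affine P a p)}) * (card A * (1 / 2 ^ s))
      \<le> card (gf_pairs d)"
  proof (rule card_none_second_moment[OF _ \<open>finite A\<close> assms(2)])
    fix a assume "a \<in> A"
    show "real (card {p \<in> gf_pairs d. s \<le> tz d (gf_affine P a p)}) = 1 / 2 ^ s * card (gf_pairs d)"
      using card_tz_gf_affine_ge[OF assms(3), of a] by (simp add: card_gf_pairs d power_add)
    fix b assume "b \<in> A" "a \<noteq> b"
    then have "card {p \<in> gf_pairs d. s \<le> tz d (gf_affine P a p) \<and> s \<le> tz d (gf_affine P b p)}
        = 2 ^ (d - s) * 2 ^ (d - s)"
      using \<open>a \<in> A\<close> assms by (intro card_tz_gf_affine_ge_both) auto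
    then show "real (card {p \<in> gf_pairs d. s \<le> tz d (gf_affine P a p) \<and> s \<le> tz d (gf_affine P b p)})
        \<le> (1 / 2 ^ s)\<^sup>2 * card (gf_pairs d)"
      by (simp add: card_gf_pairs d power_add power2_eq_square)
  qed auto
  then show ?thesis by (simp add: not_le)
qed

lemma card_exists_tz_ge_floor_log:
  assumes "finite A"
  shows "real (card {p \<in> gf_pairs d. \<exists>a\<in>A. floor_log (card A) + 8 \<le> tz d (gf_affine P a p)})
    \<le> card (gf_pairs d) / 2 ^ 7"
proof -
  define k where "k = floor_log (card A)"
  have "card A \<le> 2 * 2 ^ k"
    using floor_log_exp2_gt[of "card A"] unfolding k_def by linarith
  then have "real (card A) \<le> real (2 * 2 ^ k)" by (simp only: of_nat_le_iff)
  then have "real (card A) / 2 ^ (k + 8) \<le> 1 / 2 ^ 7"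
    by (simp add: power_add field_simps)
  have "real (card {p \<in> gf_pairs d. \<exists>a\<in>A. k + 8 \<le> tz d (gf_affine P a p)})
      \<le> card A / 2 ^ (k + 8) * card (gf_pairs d)"
    by (rule card_exists_tz_ge[OF assms])
  also have "\<dots> \<le> 1 / 2 ^ 7 * card (gf_pairs d)"
    using \<open>real (card A) / 2 ^ (k + 8) \<le> 1 / 2 ^ 7\<close> by (rule mult_right_mono) simp
  finally show ?thesis by (simp add: k_def)
qed

lemma card_all_tz_le_floor_log:
  assumes "A \<subseteq> {..<2 ^ d}" "A \<noteq> {}"
  shows "real (card {p \<in> gf_pairs d. \<forall>a\<in>A. tz d (gf_affine P a p) + 8 \<le> floor_log (card A)})
    \<le> card (gf_pairs d) / 2 ^ 7"
proof (cases "8 \<le> floor_log (card A)")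
  case True
  define k where "k = floor_log (card A)"
  have "finite A" using assms(1) finite_subset by blast
  then have "2 ^ k \<le> card A"
    using floor_log_exp2_le[of "card A"] assms(2) by (simp add: k_def card_gt_0_iff)
  moreover have "card A \<le> 2 ^ d" using card_mono[OF _ assms(1)] by simp
  ultimately have "(2::nat) ^ k \<le> 2 ^ d" by (rule le_trans)
  then have "k - 7 \<le> d" by simp
  have "k = 7 + (k - 7)" using True by (simp add: k_def)
  then have "(2::nat) ^ 7 * 2 ^ (k - 7) = 2 ^ k" by (metis power_add)
  with \<open>2 ^ k \<le> card A\<close> have "real (2 ^ 7 * 2 ^ (k - 7)) \<le> real (card A)"
    by (simp only: of_nat_le_iff)
  then have "(2::real) ^ 7 \<le> card A / 2 ^ (k - 7)" by (simp add: field_simps)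
  define Lower where "Lower = {p \<in> gf_pairs d. \<forall>a\<in>A. tz d (gf_affine P a p) + 8 \<le> k}"
  have Lower_eq: "Lower = {p \<in> gf_pairs d. \<forall>a\<in>A. tz d (gf_affine P a p) < k - 7}"
    using True by (auto simp: Lower_def k_def)
  have "real (card Lower) * 2 ^ 7 \<le> real (card Lower) * (card A / 2 ^ (k - 7))"
    using \<open>2 ^ 7 \<le> card A / 2 ^ (k - 7)\<close> by (rule mult_left_mono) simp
  also have "\<dots> \<le> card (gf_pairs d)"
    unfolding Lower_eq by (rule card_all_tz_less[OF assms \<open>k - 7 \<le> d\<close>])
  finally have "real (card Lower) * 2 ^ 7 \<le> card (gf_pairs d)" .
  then show ?thesis by (simp add: Lower_def k_def field_simps)
next
  case False
  then show ?thesis using assms(2) by auto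
qed

end

lemma coeff_tuples_2: "coeff_tuples d 2 = map_pmf (\<lambda>p. [fst p, snd p]) (pmf_of_set (gf_pairs d))"
proof -
  have "{as. length as = 2 \<and> set as \<subseteq> {..<2 ^ d}} = (\<lambda>p. [fst p, snd p]) ` gf_pairs d"
  proof
    show "{as. length as = 2 \<and> set as \<subseteq> {..<2 ^ d}} \<subseteq> (\<lambda>p. [fst p, snd p]) ` gf_pairs d"
      by (auto simp: numeral_2_eq_2 length_Suc_conv image_iff)
  qed auto
  moreover have "inj_on (\<lambda>p. [fst p, snd p]) (gf_pairs d)"
    by (auto intro: inj_onI simp: prod_eq_iff)
  ultimately show ?thesis
    unfolding coeff_tuples_def by (subst map_pmf_of_set_inj) (auto simp: lessThan_empty_iff)
qed

lemma G_fam_2: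
  "G_fam P d 2 N
    = map_pmf (\<lambda>p x. if x < N then tz d (gf_affine P x p) else 0) (pmf_of_set (gf_pairs d))"
  unfolding G_fam_def coeff_tuples_2 map_pmf_comp by (simp only: gf_eval_length_2 prod.collapse)

lemma E1_if_Max_near_floor_log:
  assumes "finite A" "A \<noteq> {}"
    and upper: "Max (fst \<psi> ` A) \<le> floor_log (card A) + 7"
    and lower: "floor_log (card A) \<le> Max (fst \<psi> ` A) + 7"
  shows "E1 \<epsilon> A \<psi>"
proof -
  obtain f g h where \<psi>: "\<psi> = (f, g, h)" by (cases \<psi>) auto
  define k where "k = floor_log (card A)"
  define r where "r = - real_of_int (tpar \<epsilon> A f)"
  have r: "r = real (lb \<epsilon>) - real (Max (f ` A)) - 9" by (simp add: r_def tpar_def)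
  have b: "real (bpar \<epsilon>) = 2 powr real (lb \<epsilon>)" by (simp add: bpar_def powr_realpow)
  have "2 ^ k \<le> card A"
    using floor_log_exp2_le[of "card A"] assms(1,2) by (simp add: k_def card_gt_0_iff)
  then have card_ge: "2 powr real k \<le> real (card A)"
    by (simp add: powr_realpow flip: of_nat_le_iff)
  have "card A \<le> 2 * 2 ^ k"
    using floor_log_exp2_gt[of "card A"] unfolding k_def by linarith
  then have "real (card A) \<le> real (2 * 2 ^ k)" by (simp only: of_nat_le_iff)
  then have card_le: "real (card A) \<le> 2 powr (real k + 1)" by (simp add: powr_add powr_realpow)
  have "2 powr (-16) * real (bpar \<epsilon>) = 2 powr (real (lb \<epsilon>) - 16)"
    by (simp add: b powr_add[symmetric])
  also have "\<dots> \<le> 2 powr (r + real k)" using upper \<psi> by (simp add: r k_def)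
  also have "\<dots> = 2 powr r * 2 powr real k" by (simp add: powr_add)
  also have "\<dots> \<le> 2 powr r * real (card A)" using card_ge by simp
  finally have "2 powr (-16) * real (bpar \<epsilon>) \<le> 2 powr r * real (card A)" .
  moreover have "2 powr r * real (card A) \<le> 2 powr (r + real k + 1)"
    using card_le by (simp add: powr_add)
  moreover have "2 powr (r + real k + 1) \<le> 2 powr (real (lb \<epsilon>) - 1)"
    using lower \<psi> by (simp add: r k_def)
  moreover have "2 powr (real (lb \<epsilon>) - 1) = 2 powr (-1) * real (bpar \<epsilon>)"
    unfolding b powr_add[symmetric] by simp
  ultimately show ?thesis by (simp add: E1_def \<psi> r_def)
qed

lemma (in gf2_field) prob_G_fam_Max_far_from_floor_log:
  assumes "A \<subseteq> {..<N}" "A \<noteq> {}" "N \<le> 2 ^ d"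
  shows "measure_pmf.prob (G_fam P d 2 N)
    {f. floor_log (card A) + 8 \<le> Max (f ` A) \<or> Max (f ` A) + 8 \<le> floor_log (card A)} \<le> 2 powr -6"
    (is "measure_pmf.prob _ ?Far \<le> _")
proof -
  define k where "k = floor_log (card A)"
  define F where "F p x = (if x < N then tz d (gf_affine P x p) else 0)" for p x
  define Upper where "Upper = {p \<in> gf_pairs d. \<exists>a\<in>A. k + 8 \<le> tz d (gf_affine P a p)}"
  define Lower where "Lower = {p \<in> gf_pairs d. \<forall>a\<in>A. tz d (gf_affine P a p) + 8 \<le> k}"
  have "finite A" and A_below: "A \<subseteq> {..<2 ^ d}"
    using assms(1,3) finite_subset by auto
  have "p \<in> Upper \<union> Lower" if "p \<in> gf_pairs d" "F p \<in> ?Far" for p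
  proof -
    have "F p ` A = (\<lambda>a. tz d (gf_affine P a p)) ` A"
      using assms(1) by (auto simp: F_def)
    then have max: "Max (F p ` A) = Max ((\<lambda>a. tz d (gf_affine P a p)) ` A)" by simp
    from that(2) consider "k + 8 \<le> Max (F p ` A)" | "Max (F p ` A) + 8 \<le> k"
      by (auto simp: k_def)
    then show ?thesis
    proof cases
      case 1
      then show ?thesis
        using that(1) \<open>finite A\<close> assms(2) by (simp add: max Max_ge_iff Upper_def)
    next
      case 2
      have "tz d (gf_affine P a p) + 8 \<le> k" if "a \<in> A" for a
      proof -
        have "tz d (gf_affine P a p) \<le> Max (F p ` A)"
          using \<open>finite A\<close> that by (simp add: max)
        then show ?thesis using 2 by linarith
      qed
      then show ?thesis using that(1) by (simp add: Lower_def)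
    qed
  qed
  then have "card (gf_pairs d \<inter> F -` ?Far) \<le> card (Upper \<union> Lower)"
    by (intro card_mono) (auto simp: Upper_def Lower_def)
  also have "\<dots> \<le> card Upper + card Lower" by (rule card_Un_le)
  finally have "real (card (gf_pairs d \<inter> F -` ?Far)) \<le> real (card Upper) + real (card Lower)"
    by linarith
  also have "\<dots> \<le> 2 powr -6 * card (gf_pairs d)"
    using card_exists_tz_ge_floor_log[OF \<open>finite A\<close>] card_all_tz_le_floor_log[OF A_below assms(2)]
    by (simp add: Upper_def Lower_def k_def powr_minus field_simps)
  finally have "real (card (gf_pairs d \<inter> F -` ?Far)) / card (gf_pairs d) \<le> 2 powr -6"
    by (simp add: card_gf_pairs field_simps)
  moreover have "G_fam P d 2 N = map_pmf F (pmf_of_set (gf_pairs d))"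
    by (simp add: G_fam_2 F_def[abs_def])
  ultimately show ?thesis
    by (simp add: measure_map_pmf measure_pmf_of_set lessThan_empty_iff)
qed

theorem lemma9:
  fixes n :: nat and \<epsilon> :: real and A :: "nat set"
    and P1 P2 P3 :: "bit poly" and d1 d2 d3 :: nat
  assumes "n \<ge> 1" and "0 < \<epsilon>" and "\<epsilon> < 1"
    and "A \<subseteq> {..<n}" and "A \<noteq> {}"
    and "d1 \<ge> 1" and "degree P1 = d1" and "irreducible P1" and "2 ^ d1 \<ge> n"
    and "degree P2 = d2" and "irreducible P2" and "2 ^ d2 \<ge> n"
    and "d2 \<ge> 5 + 2 * lb \<epsilon>"
    and "degree P3 = d3" and "irreducible P3" and "2 ^ d3 \<ge> 2 ^ 5 * bpar \<epsilon> ^ 2"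
    and "d3 \<ge> lb \<epsilon>"
  shows "measure_pmf.prob (Psi \<epsilon> n P1 d1 P2 d2 P3 d3) {\<psi>. \<not> E1 \<epsilon> A \<psi>} \<le> 2 powr (-6)"
proof -
  interpret gf2_field P1 d1 using assms(7,8) by unfold_locales
  define Far where "Far = {f. floor_log (card A) + 8 \<le> Max (f ` A) \<or> Max (f ` A) + 8 \<le> floor_log (card A)}"
  have "finite A" using assms(4) finite_subset by blast
  then have "{\<psi>. \<not> E1 \<epsilon> A \<psi>} \<subseteq> fst -` Far"
    using E1_if_Max_near_floor_log[OF _ assms(5)] by (force simp: Far_def)
  then have "measure_pmf.prob (Psi \<epsilon> n P1 d1 P2 d2 P3 d3) {\<psi>. \<not> E1 \<epsilon> A \<psi>}
      \<le> measure_pmf.prob (map_pmf fst (Psi \<epsilon> n P1 d1 P2 d2 P3 d3)) Far"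
    by (simp add: measure_map_pmf measure_pmf.finite_measure_mono)
  also have "\<dots> = measure_pmf.prob (G_fam P1 d1 2 n) Far"
    by (simp add: Psi_def map_fst_pair_pmf)
  also have "\<dots> \<le> 2 powr (-6)"
    unfolding Far_def using prob_G_fam_Max_far_from_floor_log assms(4,5,9) by simp
  finally show ?thesis .
qed

end
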